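(* Let $\gamma_*\in(0,1]$ and $\zeta_*\in(0,1]$. Define for $t\in\mathbb{R}$ \[ \tilde f(t)=\frac{1}{\sqrt{2\pi}}\int_{-\infty}^t\Big[(1-\tfrac12\zeta_* )e^{-x^2/2}+\tfrac12\zeta_*e^{-(x-2\gamma_* )^2/2}-(1-\zeta_* )e^{-x^2/2}-\zeta_*e^{-(x-\gamma_* )^2/2}\Big]dx, \] and $f(t)=|\tilde f(t)|$. Let \[ t_+=\tfrac32\gamma_*+\tfrac{1}{\gamma_*}\log\left(1-\sqrt{1-e^{-\gamma_*^2}}\right),\qquad t_-=\tfrac32\gamma_*+\tfrac{1}{\gamma_*}\log\left(1+\sqrt{1-e^{-\gamma_*^2}}\right). \] Then the set of maximizers of $f$ over $\mathbb{R}$ is exactly $\{t_+,t_-\}$, and $\tilde f(t_+)>0$, $\tilde f(t_-)<0$. *)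

theory Defs
  imports "HOL-Analysis.Analysis"
begin

definition lemma6_integrand :: "real \<Rightarrow> real \<Rightarrow> real \<Rightarrow> real" where
  "lemma6_integrand \<gamma> \<zeta> x =
     (1 - \<zeta> / 2) * exp (- (x\<^sup>2) / 2) + (\<zeta> / 2) * exp (- ((x - 2 * \<gamma>)\<^sup>2) / 2)
     - (1 - \<zeta>) * exp (- (x\<^sup>2) / 2) - \<zeta> * exp (- ((x - \<gamma>)\<^sup>2) / 2)"

definition lemma6_ftilde :: "real \<Rightarrow> real \<Rightarrow> real \<Rightarrow> real" where
  "lemma6_ftilde \<gamma> \<zeta> t =
     (1 / sqrt (2 * pi)) * (LBINT x:{..t}. lemma6_integrand \<gamma> \<zeta> x)"

definition lemma6_f :: "real \<Rightarrow> real \<Rightarrow> real \<Rightarrow> real" where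
  "lemma6_f \<gamma> \<zeta> t = \<bar>lemma6_ftilde \<gamma> \<zeta> t\<bar>"

definition lemma6_tplus :: "real \<Rightarrow> real" where
  "lemma6_tplus \<gamma> = 3/2 * \<gamma> + (1 / \<gamma>) * ln (1 - sqrt (1 - exp (- (\<gamma>\<^sup>2))))"

definition lemma6_tminus :: "real \<Rightarrow> real" where
  "lemma6_tminus \<gamma> = 3/2 * \<gamma> + (1 / \<gamma>) * ln (1 + sqrt (1 - exp (- (\<gamma>\<^sup>2))))"

end

theory Submission
  imports Defs "HOL-Probability.Distributions"
begin

text \<open>
  Up to the factor \<open>\<zeta>/2 \<cdot> sqrt (2\<pi>)\<close> the integrand is \<open>\<phi>(x) + \<phi>(x - 2\<gamma>) - 2\<phi>(x - \<gamma>)\<close>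
  for the standard normal density \<open>\<phi>\<close>: it has total integral 0 and is symmetric about \<open>\<gamma>\<close>,
  so \<open>f\<^sup>~(2\<gamma> - t) = - f\<^sup>~(t)\<close>. With \<open>y = exp (\<gamma>t - 3\<gamma>\<^sup>2/2)\<close> the integrand is a positive
  multiple of \<open>(y - 1)\<^sup>2 - (1 - exp (-\<gamma>\<^sup>2))\<close>, hence positive outside \<open>[t\<^sub>+, t\<^sub>-]\<close> and negative
  inside. So \<open>f\<^sup>~\<close> is nonnegative and strictly increasing up to \<open>t\<^sub>+\<close> and strictly decreasing
  on \<open>[t\<^sub>+, t\<^sub>-]\<close>; since \<open>t\<^sub>+ + t\<^sub>- = 2\<gamma>\<close>, antisymmetry mirrors the first piece beyond
  \<open>t\<^sub>-\<close>, and \<open>|f\<^sup>~|\<close> is maximal exactly at \<open>t\<^sub>+\<close> and \<open>t\<^sub>-\<close>.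
\<close>

lemma set_integral_Iic_split:
  fixes g :: "real \<Rightarrow> real"
  assumes g: "integrable lborel g" and "a \<le> u"
  shows "(LBINT x:{..u}. g x) = (LBINT x:{..a}. g x) + (LBINT x=a..u. g x)"
proof -
  have integrable_on: "set_integrable lborel A g" if "A \<in> sets lborel" for A
    unfolding set_integrable_def using that g by (intro integrable_mult_indicator) auto
  have "{..u} = {..a} \<union> {a<..u}"
    using \<open>a \<le> u\<close> by auto
  then have "(LBINT x:{..u}. g x) = (LBINT x:{..a}. g x) + (LBINT x:{a<..u}. g x)"
    by (simp, subst set_integral_Un) (auto intro: integrable_on)
  then show ?thesis
    using \<open>a \<le> u\<close> by (simp add: interval_integral_Ioc)
qed

lemma has_real_derivative_set_integral_Iic:
  fixes g :: "real \<Rightarrow> real"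
  assumes g: "integrable lborel g" and cont: "continuous_on UNIV g"
  shows "((\<lambda>u. LBINT x:{..u}. g x) has_real_derivative g t) (at t)"
proof -
  have "((\<lambda>u. LBINT x=t-1..u. g x) has_vector_derivative g t) (at t within {t-1..t+1})"
    using cont by (intro interval_integral_FTC2) (auto intro: continuous_on_subset)
  then have "((\<lambda>u. LBINT x=t-1..u. g x) has_real_derivative g t) (at t)"
    by (subst (asm) at_within_Icc_at) (auto simp: has_real_derivative_iff_has_vector_derivative)
  then have "((\<lambda>u. (LBINT x:{..t-1}. g x) + (LBINT x=t-1..u. g x)) has_real_derivative g t) (at t)"
    by (auto intro!: derivative_eq_intros)
  then show ?thesis
  proof (rule has_field_derivative_transform_within_open[where S = "{t-1<..}"])
    show "(LBINT x:{..t-1}. g x) + (LBINT x=t-1..u. g x) = (LBINT x:{..u}. g x)" if "u \<in> {t-1<..}" for u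
      using set_integral_Iic_split[OF g, of "t-1" u] that by simp
  qed auto
qed

lemma set_integral_Iic_add_reflect:
  fixes g :: "real \<Rightarrow> real"
  assumes g: "integrable lborel g" and reflect: "\<And>x. g (2*c - x) = g x"
    and total: "integral\<^sup>L lborel g = 0"
  shows "(LBINT x:{..t}. g x) + (LBINT x:{..2*c-t}. g x) = 0"
proof -
  have integrable_on: "set_integrable lborel A g" if "A \<in> sets lborel" for A
    unfolding set_integrable_def using that g by (intro integrable_mult_indicator) auto
  have "(LBINT x:{..2*c-t}. g x) = (LBINT x. indicator {..2*c-t} (2*c + (-1) * x) * g (2*c + (-1) * x))"
    unfolding set_lebesgue_integral_def
    using lborel_integral_real_affine[where c = "-1" and t = "2*c" and f = "\<lambda>x. indicator {..2*c-t} x * g x"]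
    by simp
  also have "\<dots> = (LBINT x:{t..}. g x)"
    unfolding set_lebesgue_integral_def using reflect
    by (intro Bochner_Integration.integral_cong) (auto split: split_indicator)
  also have "\<dots> = (LBINT x:{t<..}. g x)"
    using AE_lborel_singleton[of t] g
    by (intro set_integral_cong_set) (auto simp: set_borel_measurable_def elim!: eventually_mono)
  finally have "(LBINT x:{..2*c-t}. g x) = (LBINT x:{t<..}. g x)" .
  moreover have "(LBINT x:{..t}. g x) + (LBINT x:{t<..}. g x) = (LBINT x:{..t} \<union> {t<..}. g x)"
    by (subst set_integral_Un) (auto intro: integrable_on)
  moreover have "{..t} \<union> {t<..} = UNIV"
    by auto
  ultimately show ?thesis
    using total by (simp add: set_lebesgue_integral_def)
qed

lemma strict_mono_on_if_deriv_pos: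
  fixes F f :: "real \<Rightarrow> real"
  assumes deriv: "\<And>t. (F has_real_derivative f t) (at t)"
    and pos: "\<And>x y z. x \<in> S \<Longrightarrow> z \<in> S \<Longrightarrow> x < y \<Longrightarrow> y < z \<Longrightarrow> 0 < f y"
  shows "strict_mono_on S F"
proof (rule strict_mono_onI)
  fix x z assume "x \<in> S" "z \<in> S" "x < z"
  have "continuous_on {x..z} F"
    using deriv by (meson DERIV_isCont continuous_at_imp_continuous_on)
  then show "F x < F z"
    using \<open>x \<in> S\<close> \<open>z \<in> S\<close> deriv pos by (intro DERIV_pos_imp_increasing_open[OF \<open>x < z\<close>]) blast+
qed

lemma strict_antimono_on_if_deriv_neg:
  fixes F f :: "real \<Rightarrow> real"
  assumes deriv: "\<And>t. (F has_real_derivative f t) (at t)"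
    and neg: "\<And>x y z. x \<in> S \<Longrightarrow> z \<in> S \<Longrightarrow> x < y \<Longrightarrow> y < z \<Longrightarrow> f y < 0"
  shows "strict_antimono_on S F"
proof (rule monotone_onI)
  fix x z assume "x \<in> S" "z \<in> S" "x < z"
  have "continuous_on {x..z} F"
    using deriv by (meson DERIV_isCont continuous_at_imp_continuous_on)
  then show "F x > F z"
    using \<open>x \<in> S\<close> \<open>z \<in> S\<close> deriv neg by (intro DERIV_neg_imp_decreasing_open[OF \<open>x < z\<close>]) blast+
qed

lemma abs_maximizers_if_antisymmetric:
  fixes F :: "real \<Rightarrow> real"
  assumes antisym: "\<And>t. F (a + b - t) = - F t" and "a < b"
    and incr: "strict_mono_on {..a} F" and nonneg: "\<And>t. t \<le> a \<Longrightarrow> 0 \<le> F t"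
    and decr: "strict_antimono_on {a..b} F"
  shows "{t. \<forall>s. \<bar>F s\<bar> \<le> \<bar>F t\<bar>} = {a, b}" and "0 < F a" and "F b < 0"
proof -
  have incr_below: "0 \<le> F t \<and> F t < F a" if "t < a" for t
    using nonneg[of t] monotone_onD[OF incr, of t a] that by simp
  show "0 < F a"
    using incr_below[of "a - 1"] by simp
  moreover have "F b = - F a"
    using antisym[of a] by simp
  ultimately show "F b < 0"
    by simp
  have less: "\<bar>F t\<bar> < F a" if ne: "t \<noteq> a" "t \<noteq> b" for t
  proof -
    consider "t < a" | "a < t" "t < b" | "b < t"
      using ne by linarith
    then show ?thesis
    proof cases
      case 1
      then show ?thesis
        using incr_below by auto
    next
      case 2
      then show ?thesis
        using monotone_onD[OF decr, of a t] monotone_onD[OF decr, of t b] \<open>F b = - F a\<close> by auto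
    next
      case 3
      then show ?thesis
        using incr_below[of "a + b - t"] antisym[of t] by auto
    qed
  qed
  show "{t. \<forall>s. \<bar>F s\<bar> \<le> \<bar>F t\<bar>} = {a, b}"
  proof (intro set_eqI iffI)
    fix t assume "t \<in> {t. \<forall>s. \<bar>F s\<bar> \<le> \<bar>F t\<bar>}"
    then have "\<bar>F a\<bar> \<le> \<bar>F t\<bar>"
      by simp
    then show "t \<in> {a, b}"
      using less[of t] \<open>0 < F a\<close> by fastforce
  next
    fix t assume "t \<in> {a, b}"
    then show "t \<in> {t. \<forall>s. \<bar>F s\<bar> \<le> \<bar>F t\<bar>}"
      using less \<open>0 < F a\<close> \<open>F b = - F a\<close> by (force simp: le_less)
  qed
qed

lemma lemma6_integrand_eq:
  "lemma6_integrand \<gamma> \<zeta> x =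
     \<zeta>/2 * (exp (- (x\<^sup>2) / 2) + exp (- ((x - 2*\<gamma>)\<^sup>2) / 2) - 2 * exp (- ((x - \<gamma>)\<^sup>2) / 2))"
  by (simp add: lemma6_integrand_def algebra_simps)

lemma lemma6_integrand_normal_densities:
  "lemma6_integrand \<gamma> \<zeta> x = \<zeta>/2 * sqrt (2*pi) *
     (normal_density 0 1 x + normal_density (2*\<gamma>) 1 x - 2 * normal_density \<gamma> 1 x)"
  by (simp add: lemma6_integrand_eq normal_density_def algebra_simps)

lemma integrable_lemma6_integrand: "integrable lborel (lemma6_integrand \<gamma> \<zeta>)"
  unfolding lemma6_integrand_normal_densities[abs_def] by auto

lemma integral_lemma6_integrand: "integral\<^sup>L lborel (lemma6_integrand \<gamma> \<zeta>) = 0"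
  unfolding lemma6_integrand_normal_densities[abs_def]
  by (simp add: Bochner_Integration.integral_diff Bochner_Integration.integral_add)

lemma lemma6_integrand_reflect: "lemma6_integrand \<gamma> \<zeta> (2*\<gamma> - x) = lemma6_integrand \<gamma> \<zeta> x"
proof -
  have "(2*\<gamma> - x)\<^sup>2 = (x - 2*\<gamma>)\<^sup>2" "(2*\<gamma> - x - 2*\<gamma>)\<^sup>2 = x\<^sup>2" "(2*\<gamma> - x - \<gamma>)\<^sup>2 = (x - \<gamma>)\<^sup>2"
    by algebra+
  then show ?thesis
    by (simp add: lemma6_integrand_eq)
qed

lemma continuous_on_lemma6_integrand: "continuous_on A (lemma6_integrand \<gamma> \<zeta>)"
  unfolding lemma6_integrand_def by (intro continuous_intros) auto

lemma lemma6_integrand_factor: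
  "lemma6_integrand \<gamma> \<zeta> t = \<zeta>/2 * exp (- ((t - \<gamma>)\<^sup>2) / 2 - (\<gamma>*t - 3/2*\<gamma>\<^sup>2)) *
     ((exp (\<gamma>*t - 3/2*\<gamma>\<^sup>2) - 1)\<^sup>2 - (1 - exp (- (\<gamma>\<^sup>2))))"
proof -
  define u where "u = \<gamma>*t - 3/2*\<gamma>\<^sup>2"
  define v where "v = - ((t - \<gamma>)\<^sup>2) / 2"
  have "- (t\<^sup>2) / 2 = v - u - \<gamma>\<^sup>2" "- ((t - 2*\<gamma>)\<^sup>2) / 2 = v + u"
    unfolding u_def v_def by algebra+
  then have "lemma6_integrand \<gamma> \<zeta> t = \<zeta>/2 * (exp (v - u - \<gamma>\<^sup>2) + exp (v + u) - 2 * exp v)"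
    unfolding lemma6_integrand_eq v_def by simp
  also have "\<dots> = \<zeta>/2 * exp (v - u) * ((exp u - 1)\<^sup>2 - (1 - exp (- (\<gamma>\<^sup>2))))"
    by (simp add: exp_add exp_diff exp_minus power2_eq_square field_simps)
  finally show ?thesis
    unfolding u_def v_def .
qed

lemma exp_lemma6_tplus:
  assumes "0 < \<gamma>"
  shows "exp (\<gamma> * lemma6_tplus \<gamma> - 3/2*\<gamma>\<^sup>2) = 1 - sqrt (1 - exp (- (\<gamma>\<^sup>2)))"
proof -
  have "sqrt (1 - exp (- (\<gamma>\<^sup>2))) < 1"
    by simp
  then show ?thesis
    using assms by (simp add: lemma6_tplus_def power2_eq_square algebra_simps)
qed

lemma exp_lemma6_tminus:
  assumes "0 < \<gamma>"
  shows "exp (\<gamma> * lemma6_tminus \<gamma> - 3/2*\<gamma>\<^sup>2) = 1 + sqrt (1 - exp (- (\<gamma>\<^sup>2)))"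
proof -
  have "0 \<le> sqrt (1 - exp (- (\<gamma>\<^sup>2)))"
    by simp
  then show ?thesis
    using assms by (simp add: lemma6_tminus_def power2_eq_square algebra_simps add_pos_nonneg)
qed

lemma lemma6_tplus_less_tminus:
  assumes "0 < \<gamma>"
  shows "lemma6_tplus \<gamma> < lemma6_tminus \<gamma>"
proof -
  have "0 < sqrt (1 - exp (- (\<gamma>\<^sup>2)))"
    using assms by simp
  then have "exp (\<gamma> * lemma6_tplus \<gamma> - 3/2*\<gamma>\<^sup>2) < exp (\<gamma> * lemma6_tminus \<gamma> - 3/2*\<gamma>\<^sup>2)"
    unfolding exp_lemma6_tplus[OF assms] exp_lemma6_tminus[OF assms] by simp
  then show ?thesis
    using assms by simp
qed

lemma lemma6_tplus_add_tminus:
  assumes "0 < \<gamma>"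
  shows "lemma6_tplus \<gamma> + lemma6_tminus \<gamma> = 2*\<gamma>"
proof -
  let ?s = "sqrt (1 - exp (- (\<gamma>\<^sup>2)))"
  have "exp (\<gamma> * lemma6_tplus \<gamma> - 3/2*\<gamma>\<^sup>2) * exp (\<gamma> * lemma6_tminus \<gamma> - 3/2*\<gamma>\<^sup>2) = (1 - ?s) * (1 + ?s)"
    unfolding exp_lemma6_tplus[OF assms] exp_lemma6_tminus[OF assms] ..
  also have "\<dots> = exp (- (\<gamma>\<^sup>2))"
    by (simp add: algebra_simps)
  finally have "\<gamma> * (lemma6_tplus \<gamma> + lemma6_tminus \<gamma>) - 3*\<gamma>\<^sup>2 = - (\<gamma>\<^sup>2)"
    by (simp add: exp_add[symmetric] algebra_simps)
  then have "\<gamma> * (lemma6_tplus \<gamma> + lemma6_tminus \<gamma>) = \<gamma> * (2*\<gamma>)"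
    by (simp add: power2_eq_square algebra_simps)
  then show ?thesis
    using assms by simp
qed

lemma lemma6_integrand_sign:
  assumes "0 < \<gamma>" "0 < \<zeta>"
  shows "0 < lemma6_integrand \<gamma> \<zeta> t \<longleftrightarrow> t < lemma6_tplus \<gamma> \<or> lemma6_tminus \<gamma> < t"
    and "lemma6_integrand \<gamma> \<zeta> t < 0 \<longleftrightarrow> lemma6_tplus \<gamma> < t \<and> t < lemma6_tminus \<gamma>"
proof -
  define s where "s = sqrt (1 - exp (- (\<gamma>\<^sup>2)))"
  define h where "h x = exp (\<gamma>*x - 3/2*\<gamma>\<^sup>2)" for x
  have h_less_iff: "h x < h y \<longleftrightarrow> x < y" for x y
    using assms(1) by (simp add: h_def)
  have "0 \<le> s" "s\<^sup>2 = 1 - exp (- (\<gamma>\<^sup>2))"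
    by (simp_all add: s_def)
  then have abs_iff: "s\<^sup>2 < (h t - 1)\<^sup>2 \<longleftrightarrow> s < \<bar>h t - 1\<bar>" "(h t - 1)\<^sup>2 < s\<^sup>2 \<longleftrightarrow> \<bar>h t - 1\<bar> < s"
    using abs_le_square_iff[of "h t - 1" s] abs_le_square_iff[of s "h t - 1"] by auto
  define c where "c = \<zeta>/2 * exp (- ((t - \<gamma>)\<^sup>2) / 2 - (\<gamma>*t - 3/2*\<gamma>\<^sup>2))"
  have "0 < c"
    using assms(2) by (simp add: c_def)
  moreover have "lemma6_integrand \<gamma> \<zeta> t = c * ((h t - 1)\<^sup>2 - s\<^sup>2)"
    unfolding lemma6_integrand_factor h_def c_def \<open>s\<^sup>2 = _\<close> ..
  ultimately have "0 < lemma6_integrand \<gamma> \<zeta> t \<longleftrightarrow> s\<^sup>2 < (h t - 1)\<^sup>2"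
    and "lemma6_integrand \<gamma> \<zeta> t < 0 \<longleftrightarrow> (h t - 1)\<^sup>2 < s\<^sup>2"
    by (simp_all add: zero_less_mult_iff mult_less_0_iff)
  moreover have "h (lemma6_tplus \<gamma>) = 1 - s" "h (lemma6_tminus \<gamma>) = 1 + s"
    unfolding h_def s_def using exp_lemma6_tplus[OF assms(1)] exp_lemma6_tminus[OF assms(1)] by simp_all
  then have "t < lemma6_tplus \<gamma> \<longleftrightarrow> h t < 1 - s" "lemma6_tplus \<gamma> < t \<longleftrightarrow> 1 - s < h t"
    and "t < lemma6_tminus \<gamma> \<longleftrightarrow> h t < 1 + s" "lemma6_tminus \<gamma> < t \<longleftrightarrow> 1 + s < h t"
    using h_less_iff by metis+
  moreover have "s < \<bar>h t - 1\<bar> \<longleftrightarrow> h t < 1 - s \<or> 1 + s < h t" "\<bar>h t - 1\<bar> < s \<longleftrightarrow> 1 - s < h t \<and> h t < 1 + s"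
    by arith+
  ultimately show "0 < lemma6_integrand \<gamma> \<zeta> t \<longleftrightarrow> t < lemma6_tplus \<gamma> \<or> lemma6_tminus \<gamma> < t"
    and "lemma6_integrand \<gamma> \<zeta> t < 0 \<longleftrightarrow> lemma6_tplus \<gamma> < t \<and> t < lemma6_tminus \<gamma>"
    using abs_iff by simp_all
qed

lemma has_real_derivative_lemma6_ftilde:
  "(lemma6_ftilde \<gamma> \<zeta> has_real_derivative 1 / sqrt (2*pi) * lemma6_integrand \<gamma> \<zeta> t) (at t)"
  unfolding lemma6_ftilde_def[abs_def]
  by (intro DERIV_cmult has_real_derivative_set_integral_Iic integrable_lemma6_integrand
      continuous_on_lemma6_integrand)

lemma lemma6_ftilde_antisym:
  assumes "0 < \<gamma>"
  shows "lemma6_ftilde \<gamma> \<zeta> (lemma6_tplus \<gamma> + lemma6_tminus \<gamma> - t) = - lemma6_ftilde \<gamma> \<zeta> t"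
  using set_integral_Iic_add_reflect[OF integrable_lemma6_integrand[of \<gamma> \<zeta>]
      lemma6_integrand_reflect[of \<gamma> \<zeta>] integral_lemma6_integrand[of \<gamma> \<zeta>], of t]
  unfolding lemma6_ftilde_def lemma6_tplus_add_tminus[OF assms]
  by (simp add: eq_neg_iff_add_eq_0 add_divide_distrib[symmetric] add.commute)

lemma lemma6_ftilde_nonneg:
  assumes "0 < \<gamma>" "0 < \<zeta>" "t \<le> lemma6_tplus \<gamma>"
  shows "0 \<le> lemma6_ftilde \<gamma> \<zeta> t"
proof -
  have "0 \<le> lemma6_integrand \<gamma> \<zeta> x" if "x \<le> t" for x
    using lemma6_integrand_sign(2)[OF assms(1,2), of x] that assms(3) by linarith
  then have "0 \<le> (LBINT x:{..t}. lemma6_integrand \<gamma> \<zeta> x)"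
    unfolding set_lebesgue_integral_def
    by (intro Bochner_Integration.integral_nonneg) (auto split: split_indicator)
  then show ?thesis
    by (simp add: lemma6_ftilde_def)
qed

theorem lemma6:
  fixes \<gamma> \<zeta> :: real
  assumes "0 < \<gamma>" "\<gamma> \<le> 1" "0 < \<zeta>" "\<zeta> \<le> 1"
  shows "{t. \<forall>s. lemma6_f \<gamma> \<zeta> s \<le> lemma6_f \<gamma> \<zeta> t} = {lemma6_tplus \<gamma>, lemma6_tminus \<gamma>}
    \<and> lemma6_ftilde \<gamma> \<zeta> (lemma6_tplus \<gamma>) > 0
    \<and> lemma6_ftilde \<gamma> \<zeta> (lemma6_tminus \<gamma>) < 0"
proof -
  note deriv = has_real_derivative_lemma6_ftilde[of \<gamma> \<zeta>]
  note sign = lemma6_integrand_sign[OF assms(1,3)]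
  have "strict_mono_on {..lemma6_tplus \<gamma>} (lemma6_ftilde \<gamma> \<zeta>)"
    by (rule strict_mono_on_if_deriv_pos[OF deriv]) (auto simp: sign)
  moreover have "strict_antimono_on {lemma6_tplus \<gamma>..lemma6_tminus \<gamma>} (lemma6_ftilde \<gamma> \<zeta>)"
    by (rule strict_antimono_on_if_deriv_neg[OF deriv]) (auto simp: sign divide_less_0_iff)
  ultimately show ?thesis
    using abs_maximizers_if_antisymmetric[of "lemma6_ftilde \<gamma> \<zeta>", OF lemma6_ftilde_antisym[OF assms(1)]
        lemma6_tplus_less_tminus[OF assms(1)] _ lemma6_ftilde_nonneg[OF assms(1,3)]]
    unfolding lemma6_f_def by blast
qed

end
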